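(* There exists a game $\mathcal G=(G,\Pi,T,s_0)$ and a collective strategy $\bar\tau_\Pi$ such that $$\inf_{\sigma_{\mathsf O}\ \text{memoryless}}\mathbb P_{(\bar\tau_\Pi,\sigma_{\mathsf O})}(\text{reach }T)\;>\;\sup_{\bar\sigma_\Pi\ \text{memoryless}}\ \inf_{\sigma_{\mathsf O}\ \text{memoryless}}\mathbb P_{(\bar\sigma_\Pi,\sigma_{\mathsf O})}(\text{reach }T),$$ i.e. against an opponent restricted to memoryless strategies, the team can achieve a strictly higher guaranteed probability of reaching the target with a strategy using memory than with any memoryless collective strategy.
   Context: A game structure is $G=(\Sigma,S,(A_p)_{p\in\Sigma},(\mathsf{Av}_p)_{p\in\Sigma},\delta)$ with players $\Sigma$, a finite set $S$ of states, finite action sets $A_p$, nonempty available-action sets $\mathsf{Av}_p(s)\subseteq A_p$, and a transition function $\delta$ mapping a state and an available action profile to a probability distribution on $S$. A game is $(G,\Pi,T,s_0)$ with team $\Pi\subseteq\Sigma$, absorbing target set $T\subseteq S$, initial state $s_0$; $\Sigma\setminus\Pi=\{\mathsf O\}$ (the opponent). A strategy for $p$ maps each history (nonempty finite sequence of states) ending in $s$ to a distribution over $\mathsf{Av}_p(s)$; memoryless means it depends only on the last state. A collective strategy is a tuple of strategies of the team players, who randomise independently (joint action probability is the product of the individual probabilities). A complete strategy profile induces a probability measure $\mathbb P$ on plays from $s_0$; "reach $T$" is the event that the play visits $T$. *)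

theory Defs
  imports "HOL-Probability.Probability"
begin

text \<open>Players, states and actions are encoded as natural numbers
  (sufficient, since the theorem is existential). An action profile is a function
  from players to actions; outside the player set it takes the default value 0.\<close>

record game_structure =
  players :: "nat set"
  states  :: "nat set"
  acts    :: "nat \<Rightarrow> nat set"
  avail   :: "nat \<Rightarrow> nat \<Rightarrow> nat set"
  trans   :: "nat \<Rightarrow> (nat \<Rightarrow> nat) \<Rightarrow> nat pmf"

definition avail_profile :: "game_structure \<Rightarrow> nat \<Rightarrow> (nat \<Rightarrow> nat) \<Rightarrow> bool" where
  "avail_profile G s a \<longleftrightarrow> (\<forall>p\<in>players G. a p \<in> avail G p s) \<and> (\<forall>p. p \<notin> players G \<longrightarrow> a p = 0)"

definition wf_game :: "game_structure \<Rightarrow> nat set \<Rightarrow> nat set \<Rightarrow> nat \<Rightarrow> bool" where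
  "wf_game G Team T s0 \<longleftrightarrow>
     finite (players G) \<and> finite (states G) \<and>
     (\<forall>p\<in>players G. finite (acts G p)) \<and>
     (\<forall>p\<in>players G. \<forall>s\<in>states G. avail G p s \<noteq> {} \<and> avail G p s \<subseteq> acts G p) \<and>
     (\<forall>s\<in>states G. \<forall>a. avail_profile G s a \<longrightarrow> set_pmf (trans G s a) \<subseteq> states G) \<and>
     Team \<subseteq> players G \<and> (\<exists>opp. players G - Team = {opp}) \<and>
     T \<subseteq> states G \<and>
     (\<forall>t\<in>T. \<forall>a. avail_profile G t a \<longrightarrow> trans G t a = return_pmf t) \<and>
     s0 \<in> states G"

definition opponent :: "game_structure \<Rightarrow> nat set \<Rightarrow> nat" where
  "opponent G Team = the_elem (players G - Team)"

definition history :: "game_structure \<Rightarrow> nat list \<Rightarrow> bool" where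
  "history G h \<longleftrightarrow> h \<noteq> [] \<and> set h \<subseteq> states G"

definition is_strategy :: "game_structure \<Rightarrow> nat \<Rightarrow> (nat list \<Rightarrow> nat pmf) \<Rightarrow> bool" where
  "is_strategy G p \<sigma> \<longleftrightarrow> (\<forall>h. history G h \<longrightarrow> set_pmf (\<sigma> h) \<subseteq> avail G p (last h))"

definition memoryless :: "game_structure \<Rightarrow> (nat list \<Rightarrow> nat pmf) \<Rightarrow> bool" where
  "memoryless G \<sigma> \<longleftrightarrow>
     (\<forall>h h'. history G h \<longrightarrow> history G h' \<longrightarrow> last h = last h' \<longrightarrow> \<sigma> h = \<sigma> h')"

definition memoryless_strategy :: "game_structure \<Rightarrow> nat \<Rightarrow> (nat list \<Rightarrow> nat pmf) \<Rightarrow> bool" where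
  "memoryless_strategy G p \<sigma> \<longleftrightarrow> is_strategy G p \<sigma> \<and> memoryless G \<sigma>"

definition collective_strategy :: "game_structure \<Rightarrow> nat set \<Rightarrow> (nat \<Rightarrow> nat list \<Rightarrow> nat pmf) \<Rightarrow> bool" where
  "collective_strategy G Team \<tau> \<longleftrightarrow> (\<forall>p\<in>Team. is_strategy G p (\<tau> p))"

definition memoryless_collective :: "game_structure \<Rightarrow> nat set \<Rightarrow> (nat \<Rightarrow> nat list \<Rightarrow> nat pmf) \<Rightarrow> bool" where
  "memoryless_collective G Team \<tau> \<longleftrightarrow> (\<forall>p\<in>Team. memoryless_strategy G p (\<tau> p))"

definition next_dist :: "game_structure \<Rightarrow> (nat \<Rightarrow> nat list \<Rightarrow> nat pmf) \<Rightarrow> nat list \<Rightarrow> nat pmf" where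
  "next_dist G \<sigma> h = bind_pmf (Pi_pmf (players G) 0 (\<lambda>p. \<sigma> p h)) (\<lambda>a. trans G (last h) a)"

text \<open>Probability that, continuing from history h, the play visits T within n further steps
  (counting the current state).\<close>
primrec reach_within :: "game_structure \<Rightarrow> nat set \<Rightarrow> (nat \<Rightarrow> nat list \<Rightarrow> nat pmf) \<Rightarrow> nat \<Rightarrow> nat list \<Rightarrow> real" where
  "reach_within G T \<sigma> 0 h = (if last h \<in> T then 1 else 0)"
| "reach_within G T \<sigma> (Suc n) h =
     (if last h \<in> T then 1
      else measure_pmf.expectation (next_dist G \<sigma> h) (\<lambda>s. reach_within G T \<sigma> n (h @ [s])))"

text \<open>P(reach T) from s0: by continuity of measure, the limit (supremum) of the
  probabilities of reaching T within n steps.\<close>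
definition reach_prob :: "game_structure \<Rightarrow> nat set \<Rightarrow> (nat \<Rightarrow> nat list \<Rightarrow> nat pmf) \<Rightarrow> nat \<Rightarrow> real" where
  "reach_prob G T \<sigma> s0 = (SUP n. reach_within G T \<sigma> n [s0])"

end

theory Submission
  imports Defs
begin

text \<open>From the initial state 0 a fair coin sends the play to the decision state 2, either
  directly or through a detour state 1. At state 2 the team players 0, 1 and the opponent 2
  each pick a bit, and the target 3 is reached iff the two team bits agree and differ from the
  opponent's bit; otherwise the play is absorbed in the losing state 4.

  A team with memory plays 1 after the detour and 0 otherwise. A memoryless opponent uses the
  same distribution q on both branches, so it spoils them with probabilities q(1) and q(0),
  which sum to at most 1, and the team wins with probability at least 1/2. A memoryless team
  uses the same mixed bits, 0 with probabilities u and v, on both branches; the constant reply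
  0 or 1 of the opponent bounds the winning probability by (1 - u)(1 - v) or by u v, and one
  of these is at most 1/4.\<close>

lemma pmf_add_pmf_le_1: "x \<noteq> y \<Longrightarrow> pmf p x + pmf p y \<le> 1"
  using measure_pmf.prob_le_1[of p "{x, y}"] by (simp add: measure_measure_pmf_finite)

lemma pmf_two_point: "set_pmf p \<subseteq> {x, y} \<Longrightarrow> x \<noteq> y \<Longrightarrow> pmf p x + pmf p y = 1"
  using sum_pmf_eq_1[of "{x, y}" p] by simp

lemma is_strategyD: "is_strategy G p \<sigma> \<Longrightarrow> history G h \<Longrightarrow> set_pmf (\<sigma> h) \<subseteq> avail G p (last h)"
  by (simp add: is_strategy_def)

lemma memorylessD:
  "memoryless G \<sigma> \<Longrightarrow> history G h \<Longrightarrow> history G h' \<Longrightarrow> last h = last h' \<Longrightarrow> \<sigma> h = \<sigma> h'"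
  unfolding memoryless_def by blast

lemma component_in_set_Pi_pmf:
  "finite A \<Longrightarrow> a \<in> set_pmf (Pi_pmf A dflt Q) \<Longrightarrow> i \<in> A \<Longrightarrow> a i \<in> set_pmf (Q i)"
  by (auto simp: set_Pi_pmf PiE_dflt_def)

lemma measure_pmf_compl_singleton: "measure_pmf.prob p (- {x}) = 1 - pmf p x"
  using measure_pmf.prob_compl[of "{x}" p] by (simp add: Compl_eq_Diff_UNIV measure_pmf_single)

lemma reach_within_bounds: "0 \<le> reach_within G T \<sigma> n h \<and> reach_within G T \<sigma> n h \<le> 1"
proof (induction n arbitrary: h)
  case (Suc n)
  let ?E = "measure_pmf.expectation (next_dist G \<sigma> h) (\<lambda>s. reach_within G T \<sigma> n (h @ [s]))"
  have "0 \<le> ?E"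
    using Suc by (intro Bochner_Integration.integral_nonneg) auto
  moreover have "?E \<le> 1"
    using Suc by (intro measure_pmf.integral_le_const measure_pmf.integrable_const_bound[where B = 1]) auto
  ultimately show ?case by simp
qed simp

lemma integrable_reach_within:
  "integrable (measure_pmf p) (\<lambda>s. reach_within G T \<sigma> n (h @ [s]))"
  using reach_within_bounds by (intro measure_pmf.integrable_const_bound[where B = 1]) auto

lemma reach_within_Suc_nontarget:
  "last h \<notin> T \<Longrightarrow> reach_within G T \<sigma> (Suc n) h =
     measure_pmf.expectation (next_dist G \<sigma> h) (\<lambda>s. reach_within G T \<sigma> n (h @ [s]))"
  by simp

lemma reach_within_Suc_mono: "reach_within G T \<sigma> n h \<le> reach_within G T \<sigma> (Suc n) h"
proof (induction n arbitrary: h)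
  case 0
  show ?case
    using reach_within_bounds by (simp add: Bochner_Integration.integral_nonneg)
next
  case (Suc n)
  show ?case
  proof (cases "last h \<in> T")
    case False
    show ?thesis
      unfolding reach_within_Suc_nontarget[OF False]
      by (intro integral_mono integrable_reach_within Suc.IH)
  qed simp
qed

lemma reach_within_mono: "n \<le> m \<Longrightarrow> reach_within G T \<sigma> n h \<le> reach_within G T \<sigma> m h"
  by (rule lift_Suc_mono_le[of "\<lambda>n. reach_within G T \<sigma> n h"]) (use reach_within_Suc_mono in auto)

lemma reach_within_le_reach_prob: "reach_within G T \<sigma> n [s0] \<le> reach_prob G T \<sigma> s0"
  unfolding reach_prob_def
  using reach_within_bounds by (intro cSUP_upper bdd_aboveI[where M = 1]) auto

lemma reach_prob_nonneg: "0 \<le> reach_prob G T \<sigma> s0"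
  using reach_within_le_reach_prob[of G T \<sigma> 0 s0] reach_within_bounds[of G T \<sigma> 0 "[s0]"] by linarith

lemma reach_prob_eq_stable_value:
  assumes "\<And>m. reach_within G T \<sigma> (N + m) [s0] = r"
  shows "reach_prob G T \<sigma> s0 = r"
proof (rule antisym)
  have "reach_within G T \<sigma> n [s0] \<le> r" for n
    using reach_within_mono[of n "N + n" G T \<sigma> "[s0]"] assms[of n] by simp
  then show "reach_prob G T \<sigma> s0 \<le> r"
    unfolding reach_prob_def by (rule cSUP_least[OF UNIV_not_empty])
  show "r \<le> reach_prob G T \<sigma> s0"
    using reach_within_le_reach_prob[of G T \<sigma> N s0] assms[of 0] by simp
qed

lemma reach_within_target: "last h \<in> T \<Longrightarrow> reach_within G T \<sigma> n h = 1"
  by (cases n) simp_all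

lemma next_dist_deterministic:
  assumes "\<And>a. trans G (last h) a = d"
  shows "next_dist G \<sigma> h = d"
proof -
  have "trans G (last h) = (\<lambda>_. d)"
    using assms by auto
  then show ?thesis
    by (simp add: next_dist_def bind_pmf_const)
qed

lemma reach_within_Suc_deterministic:
  assumes "last h \<notin> T" "\<And>a. trans G (last h) a = return_pmf t"
  shows "reach_within G T \<sigma> (Suc n) h = reach_within G T \<sigma> n (h @ [t])"
  using assms by (simp add: next_dist_deterministic)

definition team_wins :: "(nat \<Rightarrow> nat) \<Rightarrow> bool" where
  "team_wins a \<longleftrightarrow> a 0 = a 1 \<and> a 0 \<noteq> a 2"

definition team_win_prob :: "(nat \<Rightarrow> nat pmf) \<Rightarrow> real" where
  "team_win_prob Q = measure_pmf.prob (Pi_pmf {0, 1, 2} 0 Q) {a. team_wins a}"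

lemma team_win_prob_fixed_team:
  assumes "Q 0 = return_pmf t" "Q 1 = return_pmf t"
  shows "team_win_prob Q = 1 - pmf (Q 2) t"
proof -
  let ?X = "Pi_pmf {0, 1, 2} 0 Q"
  have support: "a 0 = t" "a 1 = t" if "a \<in> set_pmf ?X" for a
    using component_in_set_Pi_pmf[OF _ that, of 0] component_in_set_Pi_pmf[OF _ that, of 1] assms
    by simp_all
  have "team_wins a \<longleftrightarrow> a 2 \<noteq> t" if "a \<in> set_pmf ?X" for a
    using support[OF that] by (auto simp: team_wins_def)
  then have "{a. team_wins a} \<inter> set_pmf ?X = {a. a 2 \<noteq> t} \<inter> set_pmf ?X"
    by auto
  then have "team_win_prob Q = measure_pmf.prob ?X {a. a 2 \<noteq> t}"
    unfolding team_win_prob_def by (metis measure_Int_set_pmf)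
  also have "\<dots> = measure_pmf.prob (map_pmf (\<lambda>a. a 2) ?X) (- {t})"
    by (simp add: vimage_def Compl_eq)
  also have "map_pmf (\<lambda>a. a 2) ?X = Q 2"
    by (simp add: Pi_pmf_component)
  finally show ?thesis
    by (simp add: measure_pmf_compl_singleton)
qed

lemma team_win_prob_fixed_opponent:
  assumes "Q 2 = return_pmf c"
  shows "team_win_prob Q \<le> (1 - pmf (Q 0) c) * (1 - pmf (Q 1) c)"
proof -
  let ?X = "Pi_pmf {0, 1, 2} 0 Q"
  let ?B = "\<lambda>i::nat. if i = 2 then UNIV else - {c}"
  have "a 2 = c" if "a \<in> set_pmf ?X" for a
    using component_in_set_Pi_pmf[OF _ that, of 2] assms by simp
  then have "{a. team_wins a} \<inter> set_pmf ?X \<subseteq> Pi {0, 1, 2} ?B"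
    by (auto simp: team_wins_def)
  then have "measure_pmf.prob ?X ({a. team_wins a} \<inter> set_pmf ?X)
      \<le> measure_pmf.prob ?X (Pi {0, 1, 2} ?B)"
    by (intro measure_pmf.finite_measure_mono) auto
  then have "team_win_prob Q \<le> measure_pmf.prob ?X (Pi {0, 1, 2} ?B)"
    by (simp add: team_win_prob_def measure_Int_set_pmf)
  also have "\<dots> = (\<Prod>i\<in>{0, 1, 2}. measure_pmf.prob (Q i) (?B i))"
    by (simp add: measure_Pi_pmf_Pi)
  also have "\<dots> = (1 - pmf (Q 0) c) * (1 - pmf (Q 1) c)"
    by (simp add: measure_pmf_compl_singleton)
  finally show ?thesis .
qed

lemma product_le_quarter_or_complement:
  fixes u v :: real
  assumes "0 \<le> u" "u \<le> 1" "0 \<le> v" "v \<le> 1"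
  shows "u * v \<le> 1/4 \<or> (1 - u) * (1 - v) \<le> 1/4"
proof (cases "u + v \<le> 1")
  case True
  have "u * v \<le> u * (1 - u)"
    using True assms by (intro mult_left_mono) auto
  also have "\<dots> \<le> 1/4"
    using zero_le_power2[of "u - 1/2"] by (simp add: power2_eq_square algebra_simps)
  finally show ?thesis ..
next
  case False
  have "(1 - u) * (1 - v) \<le> (1 - u) * u"
    using False assms by (intro mult_left_mono) auto
  also have "\<dots> \<le> 1/4"
    using zero_le_power2[of "u - 1/2"] by (simp add: power2_eq_square algebra_simps)
  finally show ?thesis ..
qed

definition coordination_game :: game_structure where
  "coordination_game = \<lparr>players = {0, 1, 2}, states = {0, 1, 2, 3, 4},
     acts = (\<lambda>p. {0, 1}), avail = (\<lambda>p s. {0, 1}),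
     trans = (\<lambda>s a.
       if s = 0 then pmf_of_set {1, 2}
       else if s = 1 then return_pmf 2
       else if s = 2 then return_pmf (if team_wins a then 3 else 4)
       else return_pmf s)\<rparr>"

lemma coordination_game_simps [simp]:
  "players coordination_game = {0, 1, 2}"
  "states coordination_game = {0, 1, 2, 3, 4}"
  "acts coordination_game p = {0, 1}"
  "avail coordination_game p s = {0, 1}"
  "trans coordination_game s a =
     (if s = 0 then pmf_of_set {1, 2}
      else if s = 1 then return_pmf 2
      else if s = 2 then return_pmf (if team_wins a then 3 else 4)
      else return_pmf s)"
  by (simp_all add: coordination_game_def)

lemma wf_coordination_game: "wf_game coordination_game {0, 1} {3} 0"
  by (auto simp: wf_game_def set_pmf_of_set)

lemma opponent_coordination_game: "opponent coordination_game {0, 1} = 2"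
proof -
  have "players coordination_game - {0, 1} = {2}"
    by auto
  then show ?thesis
    by (simp add: opponent_def)
qed

lemma reach_within_lose:
  "last h = 4 \<Longrightarrow> reach_within coordination_game {3} \<sigma> n h = 0"
proof (induction n arbitrary: h)
  case (Suc n)
  then show ?case
    by (subst reach_within_Suc_deterministic[where t = 4]) simp_all
qed simp

lemma reach_within_decide:
  assumes "last h = 2"
  shows "reach_within coordination_game {3} \<sigma> (Suc n) h = team_win_prob (\<lambda>p. \<sigma> p h)"
proof -
  let ?X = "Pi_pmf {0, 1, 2} 0 (\<lambda>p. \<sigma> p h)"
  let ?outcome = "\<lambda>a. if team_wins a then 3 else 4"
  have "next_dist coordination_game \<sigma> h = map_pmf ?outcome ?X"
    using assms by (simp add: next_dist_def map_pmf_def)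
  then have "reach_within coordination_game {3} \<sigma> (Suc n) h =
      measure_pmf.expectation ?X (\<lambda>a. reach_within coordination_game {3} \<sigma> n (h @ [?outcome a]))"
    using assms by simp
  also have "\<dots> = measure_pmf.expectation ?X (indicator {a. team_wins a})"
    by (intro Bochner_Integration.integral_cong)
      (auto simp: reach_within_target reach_within_lose indicator_def)
  finally show ?thesis
    by (simp add: team_win_prob_def)
qed

lemma reach_within_detour:
  "last h = 1 \<Longrightarrow> reach_within coordination_game {3} \<sigma> (Suc n) h =
     reach_within coordination_game {3} \<sigma> n (h @ [2])"
  by (rule reach_within_Suc_deterministic) simp_all

lemma reach_within_start:
  "reach_within coordination_game {3} \<sigma> (Suc n) [0] =
     (reach_within coordination_game {3} \<sigma> n [0, 1] + reach_within coordination_game {3} \<sigma> n [0, 2]) / 2"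
  by (simp add: next_dist_deterministic integral_pmf_of_set)

lemma reach_prob_coordination_game:
  "reach_prob coordination_game {3} \<sigma> 0 =
     (team_win_prob (\<lambda>p. \<sigma> p [0, 1, 2]) + team_win_prob (\<lambda>p. \<sigma> p [0, 2])) / 2"
proof (rule reach_prob_eq_stable_value[where N = 3])
  fix m
  have "reach_within coordination_game {3} \<sigma> (Suc (Suc m)) [0, 1] = team_win_prob (\<lambda>p. \<sigma> p [0, 1, 2])"
    by (simp add: reach_within_detour reach_within_decide del: reach_within.simps)
  moreover have "reach_within coordination_game {3} \<sigma> (Suc (Suc m)) [0, 2] = team_win_prob (\<lambda>p. \<sigma> p [0, 2])"
    by (simp add: reach_within_decide del: reach_within.simps)
  moreover have "3 + m = Suc (Suc (Suc m))"
    by simp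
  ultimately show "reach_within coordination_game {3} \<sigma> (3 + m) [0] =
      (team_win_prob (\<lambda>p. \<sigma> p [0, 1, 2]) + team_win_prob (\<lambda>p. \<sigma> p [0, 2])) / 2"
    by (simp only: reach_within_start)
qed

definition remember_detour :: "nat \<Rightarrow> nat list \<Rightarrow> nat pmf" where
  "remember_detour p h = return_pmf (if 1 \<in> set h then 1 else 0)"

lemma collective_strategy_remember_detour:
  "collective_strategy coordination_game {0, 1} remember_detour"
  by (simp add: collective_strategy_def is_strategy_def remember_detour_def)

lemma remember_detour_guarantee:
  assumes "memoryless_strategy coordination_game 2 \<rho>"
  shows "1/2 \<le> reach_prob coordination_game {3} (remember_detour(2 := \<rho>)) 0"
proof -
  let ?\<sigma> = "remember_detour(2 := \<rho>)"
  have same: "\<rho> [0, 1, 2] = \<rho> [0, 2]"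
    using assms memorylessD[of coordination_game \<rho> "[0, 1, 2]" "[0, 2]"]
    by (simp add: memoryless_strategy_def history_def)
  have "team_win_prob (\<lambda>p. ?\<sigma> p [0, 1, 2]) = 1 - pmf (\<rho> [0, 1, 2]) 1"
    by (subst team_win_prob_fixed_team[where t = 1]) (simp_all add: remember_detour_def)
  moreover have "team_win_prob (\<lambda>p. ?\<sigma> p [0, 2]) = 1 - pmf (\<rho> [0, 2]) 0"
    by (subst team_win_prob_fixed_team[where t = 0]) (simp_all add: remember_detour_def)
  ultimately show ?thesis
    using same pmf_add_pmf_le_1[of 0 1 "\<rho> [0, 2]"] by (simp add: reach_prob_coordination_game)
qed

lemma memoryless_team_has_quarter_reply:
  assumes "memoryless_collective coordination_game {0, 1} \<tau>"
  obtains c where "c \<in> {0, 1}"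
    "\<And>h. h \<in> {[0, 1, 2], [0, 2]} \<Longrightarrow> team_win_prob (\<lambda>p. (\<tau>(2 := \<lambda>_. return_pmf c)) p h) \<le> 1/4"
proof -
  have h2: "history coordination_game [2]"
    by (simp add: history_def)
  have strategy: "memoryless_strategy coordination_game p (\<tau> p)" if "p \<in> {0, 1}" for p
    using assms that unfolding memoryless_collective_def by blast
  have memoryless: "\<tau> p h = \<tau> p [2]"
    if "p \<in> {0, 1}" "history coordination_game h" "last h = 2" for p h
    using strategy[OF that(1)] memorylessD[OF _ that(2) h2, of "\<tau> p"] that(3)
    by (simp add: memoryless_strategy_def)
  have complement: "pmf (\<tau> p [2]) 1 = 1 - pmf (\<tau> p [2]) 0" if "p \<in> {0, 1}" for p
  proof -
    have "set_pmf (\<tau> p [2]) \<subseteq> {0, 1}"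
      using strategy[OF that] is_strategyD[OF _ h2, of p "\<tau> p"]
      by (simp add: memoryless_strategy_def)
    then show ?thesis
      using pmf_two_point[of "\<tau> p [2]" 0 1] by simp
  qed
  have "pmf (\<tau> 0 [2]) 0 * pmf (\<tau> 1 [2]) 0 \<le> 1/4 \<or>
      (1 - pmf (\<tau> 0 [2]) 0) * (1 - pmf (\<tau> 1 [2]) 0) \<le> 1/4"
    by (intro product_le_quarter_or_complement pmf_nonneg pmf_le_1)
  then obtain c :: nat where "c \<in> {0, 1}" and c: "(1 - pmf (\<tau> 0 [2]) c) * (1 - pmf (\<tau> 1 [2]) c) \<le> 1/4"
    using complement[of 0] complement[of 1] by fastforce
  moreover have "team_win_prob (\<lambda>p. (\<tau>(2 := \<lambda>_. return_pmf c)) p h) \<le> 1/4"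
    if "h \<in> {[0, 1, 2], [0, 2]}" for h
  proof -
    have "team_win_prob (\<lambda>p. (\<tau>(2 := \<lambda>_. return_pmf c)) p h) \<le> (1 - pmf (\<tau> 0 h) c) * (1 - pmf (\<tau> 1 h) c)"
      using team_win_prob_fixed_opponent[of "\<lambda>p. (\<tau>(2 := \<lambda>_. return_pmf c)) p h" c] by simp
    also have "\<dots> \<le> 1/4"
      using c that memoryless[of 0 h] memoryless[of 1 h] by (auto simp: history_def)
    finally show ?thesis .
  qed
  ultimately show ?thesis
    using that by blast
qed

lemma memoryless_team_guarantee_le_quarter:
  assumes "memoryless_collective coordination_game {0, 1} \<tau>"
  shows "(INF \<rho> \<in> {\<rho>. memoryless_strategy coordination_game 2 \<rho>}.
           reach_prob coordination_game {3} (\<tau>(2 := \<rho>)) 0) \<le> 1/4"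
proof -
  obtain c where "c \<in> {0, 1}" and win_bound:
    "\<And>h. h \<in> {[0, 1, 2], [0, 2]} \<Longrightarrow> team_win_prob (\<lambda>p. (\<tau>(2 := \<lambda>_. return_pmf c)) p h) \<le> 1/4"
    using memoryless_team_has_quarter_reply[OF assms] by blast
  have "reach_prob coordination_game {3} (\<tau>(2 := \<lambda>_. return_pmf c)) 0 \<le> 1/4"
    using win_bound[of "[0, 1, 2]"] win_bound[of "[0, 2]"] by (simp add: reach_prob_coordination_game)
  moreover have "memoryless_strategy coordination_game 2 (\<lambda>_. return_pmf c)"
    using \<open>c \<in> {0, 1}\<close> by (auto simp: memoryless_strategy_def memoryless_def is_strategy_def)
  ultimately show ?thesis
    using reach_prob_nonneg by (intro cINF_lower2 bdd_belowI) auto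
qed

theorem theorem2:
  shows "\<exists>G Team T s0 \<tau>.
    wf_game G Team T s0 \<and> collective_strategy G Team \<tau> \<and>
    (INF \<sigma>O \<in> {\<sigma>. memoryless_strategy G (opponent G Team) \<sigma>}.
        reach_prob G T (\<tau>(opponent G Team := \<sigma>O)) s0)
    > (SUP \<tau>' \<in> {\<tau>'. memoryless_collective G Team \<tau>'}.
        INF \<sigma>O \<in> {\<sigma>. memoryless_strategy G (opponent G Team) \<sigma>}.
          reach_prob G T (\<tau>'(opponent G Team := \<sigma>O)) s0)"
proof -
  let ?guarantee = "\<lambda>\<tau>. INF \<rho> \<in> {\<rho>. memoryless_strategy coordination_game 2 \<rho>}.
    reach_prob coordination_game {3} (\<tau>(2 := \<rho>)) 0"
  have "(\<lambda>h. return_pmf 0) \<in> {\<rho>. memoryless_strategy coordination_game 2 \<rho>}"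
    by (simp add: memoryless_strategy_def memoryless_def is_strategy_def)
  then have "1/2 \<le> ?guarantee remember_detour"
    by (intro cINF_greatest) (blast intro: remember_detour_guarantee)+
  moreover have "(\<lambda>p h. return_pmf 0) \<in> {\<tau>. memoryless_collective coordination_game {0, 1} \<tau>}"
    by (simp add: memoryless_collective_def memoryless_strategy_def memoryless_def is_strategy_def)
  then have "(SUP \<tau> \<in> {\<tau>. memoryless_collective coordination_game {0, 1} \<tau>}. ?guarantee \<tau>) \<le> 1/4"
    by (intro cSUP_least) (blast intro: memoryless_team_guarantee_le_quarter)+
  ultimately have "?guarantee remember_detour >
      (SUP \<tau> \<in> {\<tau>. memoryless_collective coordination_game {0, 1} \<tau>}. ?guarantee \<tau>)"
    by linarith
  then show ?thesis
    using wf_coordination_game collective_strategy_remember_detour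
    unfolding opponent_coordination_game[symmetric] by blast
qed

end
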